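(* Let $\mu>0$, $c>0$, $m>0$, $\tilde\delta\in(0,1/2)$, $C\ge0$, $g\ge0$, and real numbers $F_k\ge F^\star\ge0$, with $\frac{g^2}{4c^2}+\frac{4\tilde\delta\mu F_k}{3m}>0$. Define $\lambda>0$ by $$2\lambda=\max\Big(\sqrt{\frac{4Cg^3}{\frac{1}{4c^2}g^2+\frac{4\tilde\delta\mu F_k}{3m}}}-\mu,\ \mu\Big),$$ and set $r=\frac{g}{2\lambda+\mu}$ and $\tilde\epsilon=\tilde\delta\frac{\mu}{2\lambda+\mu}$. Then $$4Cr^3-\frac{\lambda}{c^2}r^2\le\frac{2\lambda}{2\lambda+\mu}\cdot\frac{4\tilde\epsilon}{m}(F_k-F^\star)+4\tilde\epsilon\Big(1+\frac1m\Big)F^\star.$$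
   Context: In the paper's application, $g=\|\nabla F(x_k)\|_2$, $F_k=F(x_k)$, $F^\star=\min F$, $C$ bounds the cubic Taylor remainder, and $\lambda=\lambda_{k+1}$, $r=r_{k+1}$, $\tilde\epsilon=\tilde\epsilon_{k+1}$; the claim is a purely real-number inequality. *)

theory Defs
  imports Complex_Main
begin

end

theory Submission
  imports Defs
begin

text \<open>Write \<open>L = 2\<lambda> + \<mu>\<close>, so that \<open>r = g/L\<close> and \<open>\<epsilon> = \<delta>\<mu>/L\<close>. The choice of \<open>\<lambda>\<close> makes
  \<open>\<surd>(4Cg\<^sup>3/D) \<le> L\<close> for the denominator \<open>D\<close> under the square root, i.e.
  \<open>4Cr\<^sup>3 \<le> D/L = L r\<^sup>2/(4c\<^sup>2) + (4\<epsilon>/(3m)) F\<^sub>k\<close>. Since \<open>2\<lambda> \<ge> \<mu>\<close> we have \<open>L \<le> 4\<lambda>\<close>, so the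
  first term is absorbed by \<open>\<lambda>r\<^sup>2/c\<^sup>2\<close>, and \<open>2\<lambda>/L \<ge> 1/2\<close>, which bounds the second term by
  the right-hand side after splitting \<open>F\<^sub>k = (F\<^sub>k - F\<^sup>\<star>) + F\<^sup>\<star>\<close>.\<close>

lemma cube_le_of_sqrt_le:
  fixes C g D L :: real
  assumes "0 < D" and "0 \<le> C" and "0 \<le> g" and "0 < L"
    and "sqrt (4 * C * g^3 / D) \<le> L"
  shows "4 * C * (g / L)^3 \<le> D / L"
proof -
  have "4 * C * g^3 / D \<le> L^2"
    using sqrt_le_D assms(5) .
  then have "4 * C * g^3 \<le> L^2 * D"
    using \<open>0 < D\<close> by (simp add: divide_le_eq mult.commute)
  then have "4 * C * g^3 / L^3 \<le> L^2 * D / L^3"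
    using \<open>0 < L\<close> by (simp add: divide_right_mono)
  also have "\<dots> = D / L"
    using \<open>0 < L\<close> by (simp add: power2_eq_square power3_eq_cube)
  finally show ?thesis
    by (simp add: power_divide)
qed

lemma split_value_bound:
  fixes e m t Fk Fstar :: real
  assumes "0 \<le> e" and "0 < m" and "1/2 \<le> t"
    and "Fstar \<le> Fk" and "0 \<le> Fstar"
  shows "4 * e / (3 * m) * Fk \<le> t * (4 * e / m) * (Fk - Fstar) + 4 * e * (1 + 1 / m) * Fstar"
proof -
  have "Fk / 3 \<le> 1/2 * (Fk - Fstar) + Fstar"
    using assms(4,5) by (simp add: field_simps)
  also have "\<dots> \<le> t * (Fk - Fstar) + (m + 1) * Fstar"
  proof (rule add_mono)
    show "1/2 * (Fk - Fstar) \<le> t * (Fk - Fstar)"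
      using assms(3,4) by (intro mult_right_mono) simp_all
    show "Fstar \<le> (m + 1) * Fstar"
      using assms(2,5) by (simp add: algebra_simps)
  qed
  finally have "Fk / 3 \<le> t * (Fk - Fstar) + (m + 1) * Fstar" .
  then have "4 * e / m * (Fk / 3) \<le> 4 * e / m * (t * (Fk - Fstar) + (m + 1) * Fstar)"
    using assms(1,2) by (intro mult_left_mono) simp_all
  moreover have "4 * e / m * (Fk / 3) = 4 * e / (3 * m) * Fk"
    by simp
  moreover have "4 * e / m * (t * (Fk - Fstar) + (m + 1) * Fstar)
      = t * (4 * e / m) * (Fk - Fstar) + 4 * e * (1 + 1 / m) * Fstar"
    using \<open>0 < m\<close> by (simp add: field_simps)
  ultimately show ?thesis
    by simp
qed

theorem mainTheorem11:
  fixes mu c m delta C g Fk Fstar lam r eps :: real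
  assumes "mu > 0" and "c > 0" and "m > 0"
    and "0 < delta" and "delta < 1/2"
    and "C \<ge> 0" and "g \<ge> 0"
    and "Fk \<ge> Fstar" and "Fstar \<ge> 0"
    and "g^2 / (4 * c^2) + 4 * delta * mu * Fk / (3 * m) > 0"
    and "2 * lam = max (sqrt (4 * C * g^3 / (g^2 / (4 * c^2) + 4 * delta * mu * Fk / (3 * m))) - mu) mu"
    and "r = g / (2 * lam + mu)"
    and "eps = delta * mu / (2 * lam + mu)"
  shows "4 * C * r^3 - lam / c^2 * r^2
    \<le> 2 * lam / (2 * lam + mu) * (4 * eps / m) * (Fk - Fstar)
       + 4 * eps * (1 + 1 / m) * Fstar"
proof -
  define D where "D = g^2 / (4 * c^2) + 4 * delta * mu * Fk / (3 * m)"
  define L where "L = 2 * lam + mu"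
  have lam_ge: "mu \<le> 2 * lam" and sqrt_le: "sqrt (4 * C * g^3 / D) \<le> L"
    using assms(11) unfolding D_def L_def by simp_all
  have "0 < L"
    using lam_ge \<open>mu > 0\<close> unfolding L_def by simp
  have r: "r = g / L" and eps: "eps = delta * mu / L"
    using assms(12,13) unfolding L_def by simp_all
  have "D / L = L / (4 * c^2) * r^2 + 4 * eps / (3 * m) * Fk"
    using \<open>0 < L\<close> \<open>c > 0\<close> \<open>m > 0\<close> unfolding D_def r eps by (simp add: field_simps power2_eq_square)
  then have cube: "4 * C * r^3 \<le> L / (4 * c^2) * r^2 + 4 * eps / (3 * m) * Fk"
    using cube_le_of_sqrt_le[OF _ assms(6,7) \<open>0 < L\<close> sqrt_le] assms(10)
    unfolding D_def r by simp
  have "L / (4 * c^2) * r^2 \<le> lam / c^2 * r^2"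
    using lam_ge \<open>c > 0\<close> unfolding L_def by (intro mult_right_mono) (simp_all add: divide_simps)
  moreover have "4 * eps / (3 * m) * Fk
      \<le> 2 * lam / L * (4 * eps / m) * (Fk - Fstar) + 4 * eps * (1 + 1 / m) * Fstar"
    using lam_ge \<open>0 < L\<close> assms(1,3,4,8,9)
    by (intro split_value_bound) (simp_all add: eps L_def field_simps)
  ultimately show ?thesis
    using cube unfolding L_def by linarith
qed

end
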